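(* Let $q \ge 2$ and $n > 1$ be integers, let $\Sigma = \{0,1,\dots,q-1\}$, and let $m = 2^n - 1$. Then the truth table $T_n(L_q^m)$ is a binary (i.e. $2$-ary) $Z_{n+1}$ instance.
   Context: Zimin words are defined recursively over an alphabet of variables $x_1, x_2, \dots$ by $Z_1 = x_1$ and $Z_{k+1} = Z_k\, x_{k+1}\, Z_k$; thus $Z_k$ has length $2^k-1$ (e.g. $Z_2 = x_1x_2x_1$, $Z_3 = x_1x_2x_1x_3x_1x_2x_1$). A word $W$ over an alphabet $A$ is an instance of a word $V$ (a "$V$ instance") if there is a non-erasing monoid homomorphism $\phi$ from words over the letters of $V$ to $A^+$ (every letter is sent to a nonempty word over $A$) with $\phi(V) = W$. $L_q^m$ denotes the sequence of all $q^m$ words of length $m$ over $\Sigma$ listed in lexicographic order (with $0<1<\dots<q-1$; equivalently, ordered by their value as base-$q$ numerals). The truth table $T_n(L_q^m) = t_1 t_2 \cdots t_{q^m}$ is the word of length $q^m$ over $\{0,1\}$ such that $t_i = 1$ if and only if the $i$-th word of $L_q^m$ is a $Z_n$ instance. For example, for $q=2$, $n=2$, $m=3$ one has $T_2(L_2^3) = 10100101$. *)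

theory Defs
  imports Main "HOL-Library.List_Lexorder"
begin

fun zimin :: "nat \<Rightarrow> nat list" where
  "zimin 0 = []"
| "zimin (Suc 0) = [1]"
| "zimin (Suc (Suc k)) = zimin (Suc k) @ [Suc (Suc k)] @ zimin (Suc k)"

definition is_instance :: "'a list \<Rightarrow> 'b list \<Rightarrow> bool" where
  "is_instance V W \<longleftrightarrow>
     (\<exists>\<phi> :: 'a \<Rightarrow> 'b list. (\<forall>x \<in> set V. \<phi> x \<noteq> []) \<and> concat (map \<phi> V) = W)"

definition lex_words :: "nat \<Rightarrow> nat \<Rightarrow> nat list list" where
  "lex_words q m = sorted_list_of_set {w :: nat list. length w = m \<and> set w \<subseteq> {0..<q}}"

definition truth_table :: "nat \<Rightarrow> nat \<Rightarrow> nat \<Rightarrow> nat list" where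
  "truth_table n q m = map (\<lambda>w. if is_instance (zimin n) w then 1 else 0) (lex_words q m)"

end

theory Submission
  imports Defs
begin

text \<open>Index the words of length m over {0..<q} by their base-q values, so that the truth table
  has a 1 at position i iff i is the value of \<phi>(Z_n) for an assignment \<phi> of single digits to the
  variables. Since the variables of Z_n first occur in the order x_1, ..., x_n, such values compare
  like the tuples (\<phi> x_1, ..., \<phi> x_n) lexicographically.
  For r = n+1, n, ..., 1 let a_r be the value of the assignment that is 0 on x_1, ..., x_(r-1), sends
  x_r to 1 (to q-1 if r = 1) and all later variables to q-1; thus a_(n+1) = 0 and a_1 = q^m - 1.
  The difference d_r = a_r - a_(r+1) is again the value of an assignment, adding d_r maps the
  instance values in [0, a_(r+1)] exactly onto those in [d_r, a_r], and d_r \<ge> a_(r+1) + 2.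
  So the prefix of length a_r + 1 has the form A y A with A the prefix of length a_(r+1) + 1 and
  y nonempty, and by induction it is a Z_(n+2-r) instance.\<close>

fun radix_value :: "nat \<Rightarrow> nat list \<Rightarrow> nat" where
  "radix_value q [] = 0"
| "radix_value q (x # xs) = x * q ^ length xs + radix_value q xs"

lemma radix_value_append:
  "radix_value q (u @ v) = radix_value q u * q ^ length v + radix_value q v"
  by (induction u) (auto simp: algebra_simps power_add)

lemma radix_value_less_power:
  "set w \<subseteq> {..<q} \<Longrightarrow> radix_value q w < q ^ length w"
proof (induction w)
  case (Cons x xs)
  then have "radix_value q (x # xs) < (x + 1) * q ^ length xs" by simp
  also have "\<dots> \<le> q * q ^ length xs" using Cons.prems by (intro mult_le_mono1) simp
  finally show ?case by simp
qed simp

lemma radix_value_strict_mono: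
  assumes "length u = length v" "set u \<subseteq> {..<q}" "set v \<subseteq> {..<q}" "u < v"
  shows "radix_value q u < radix_value q v"
  using assms
proof (induction u arbitrary: v)
  case (Cons a x v)
  then obtain b y where v: "v = b # y" by (cases v) auto
  show ?case
  proof (cases "a < b")
    case True
    have "radix_value q (a # x) < (a + 1) * q ^ length x"
      using radix_value_less_power[of x q] Cons.prems by auto
    also have "\<dots> \<le> b * q ^ length x" using True by (intro mult_le_mono1) simp
    also have "\<dots> \<le> radix_value q v" using v Cons.prems(1) by simp
    finally show ?thesis .
  next
    case False
    then show ?thesis using Cons v by (auto simp: list_less_def)
  qed
qed (simp add: list_less_def)

lemma radix_value_map_add:
  "radix_value q (map (\<lambda>k. f k + g k) w) = radix_value q (map f w) + radix_value q (map g w)"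
  by (induction w) (auto simp: algebra_simps)

lemma radix_value_map_diff:
  assumes "\<forall>k\<in>set w. g k \<le> f k"
  shows "radix_value q (map (\<lambda>k. f k - g k) w) + radix_value q (map g w) = radix_value q (map f w)"
  using radix_value_map_add[of q "\<lambda>k. f k - g k" g w] assms by (simp cong: map_cong)

lemma radix_value_replicate_max:
  "q \<ge> 1 \<Longrightarrow> radix_value q (replicate L (q - 1)) = q ^ L - 1"
proof (induction L)
  case (Suc L)
  have "1 \<le> q ^ L" using Suc.prems by simp
  then show ?case using Suc by (simp add: diff_mult_distrib)
qed simp

lemma radix_value_zeros: "set w \<subseteq> {0} \<Longrightarrow> radix_value q w = 0"
  by (induction w) auto

lemma radix_value_append_Cons_gap:
  assumes "length s = length t" "set s \<subseteq> {..<q}" "a < b"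
  shows "radix_value q (p @ a # s) + 1 + radix_value q t \<le> radix_value q (p @ b # t)"
proof -
  have "a * q ^ length s + radix_value q s + 1 \<le> (a + 1) * q ^ length s"
    using radix_value_less_power[OF assms(2)] by simp
  also have "\<dots> \<le> b * q ^ length s" using assms(3) by (intro mult_le_mono1) simp
  finally show ?thesis using assms(1) by (simp add: radix_value_append)
qed

lemma radix_value_pos: "x \<in> set w \<Longrightarrow> 0 < x \<Longrightarrow> 0 < q \<Longrightarrow> 0 < radix_value q w"
  by (induction w) auto

lemma map_sorted_list_of_set_strict_mono_on:
  fixes f :: "'a::linorder \<Rightarrow> 'b::linorder"
  assumes "finite A" "strict_mono_on A f"
  shows "map f (sorted_list_of_set A) = sorted_list_of_set (f ` A)"
proof (rule sorted_distinct_set_unique)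
  have "sorted_wrt (<) (map f (sorted_list_of_set A))"
    unfolding sorted_wrt_map using assms
    by (intro sorted_wrt_mono_rel[OF _ strict_sorted_list_of_set]) (auto simp: strict_mono_on_def)
  then show "sorted (map f (sorted_list_of_set A))" "distinct (map f (sorted_list_of_set A))"
    by (auto simp: strict_sorted_iff)
qed (use assms in auto)

definition digit_words :: "nat \<Rightarrow> nat \<Rightarrow> nat list set" where
  "digit_words q m = {w. length w = m \<and> set w \<subseteq> {0..<q}}"

lemma finite_digit_words: "finite (digit_words q m)"
  using finite_lists_length_eq[of "{0..<q}" m] unfolding digit_words_def by (simp add: conj_commute)

lemma card_digit_words: "card (digit_words q m) = q ^ m"
  using card_lists_length_eq[of "{0..<q}" m] unfolding digit_words_def by (simp add: conj_commute)

lemma strict_mono_on_radix_value: "strict_mono_on (digit_words q m) (radix_value q)"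
  by (intro strict_mono_onI radix_value_strict_mono) (auto simp: digit_words_def)

lemma radix_value_image_digit_words: "radix_value q ` digit_words q m = {..<q ^ m}"
proof (rule card_subset_eq)
  show "radix_value q ` digit_words q m \<subseteq> {..<q ^ m}"
    using radix_value_less_power by (auto simp: digit_words_def atLeast0LessThan)
  show "card (radix_value q ` digit_words q m) = card {..<q ^ m}"
    using strict_mono_on_imp_inj_on[OF strict_mono_on_radix_value]
    by (simp add: card_image card_digit_words)
qed simp

lemma map_radix_value_lex_words: "map (radix_value q) (lex_words q m) = [0..<q ^ m]"
proof -
  have "lex_words q m = sorted_list_of_set (digit_words q m)"
    unfolding lex_words_def digit_words_def ..
  then show ?thesis
    using map_sorted_list_of_set_strict_mono_on[OF finite_digit_words strict_mono_on_radix_value]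
    by (simp add: radix_value_image_digit_words lessThan_atLeast0)
qed

lemma length_lex_words: "length (lex_words q m) = q ^ m"
  using arg_cong[OF map_radix_value_lex_words, of length] by simp

lemma nth_lex_words:
  assumes "i < q ^ m"
  shows "lex_words q m ! i \<in> digit_words q m" "radix_value q (lex_words q m ! i) = i"
proof -
  show "lex_words q m ! i \<in> digit_words q m"
    using assms finite_digit_words length_lex_words[of q m] nth_mem[of i "lex_words q m"]
    unfolding lex_words_def digit_words_def by simp
  show "radix_value q (lex_words q m ! i) = i"
    using arg_cong[OF map_radix_value_lex_words[of q m], of "\<lambda>l. l ! i"] assms length_lex_words[of q m]
    by simp
qed

lemma length_concat_map_nonempty:
  "\<forall>x\<in>set V. \<phi> x \<noteq> [] \<Longrightarrow> length V \<le> length (concat (map \<phi> V))"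
proof (induction V)
  case (Cons a V)
  then have "length V \<le> length (concat (map \<phi> V))" "0 < length (\<phi> a)" by simp_all
  then show ?case by (simp del: length_greater_0_conv)
qed simp

lemma concat_map_eq_map_hd:
  "\<forall>x\<in>set V. \<phi> x \<noteq> [] \<Longrightarrow> length (concat (map \<phi> V)) = length V
   \<Longrightarrow> concat (map \<phi> V) = map (\<lambda>x. hd (\<phi> x)) V"
proof (induction V)
  case (Cons a V)
  have "length V \<le> length (concat (map \<phi> V))" "\<phi> a \<noteq> []"
    using length_concat_map_nonempty Cons.prems(1) by auto
  moreover from \<open>\<phi> a \<noteq> []\<close> have "0 < length (\<phi> a)" by simp
  ultimately have "length (\<phi> a) = 1" "length (concat (map \<phi> V)) = length V"
    using Cons.prems(2) by (simp_all del: length_greater_0_conv)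
  then show ?case using Cons by (cases "\<phi> a") auto
qed simp

lemma is_instance_same_length_iff:
  "length w = length V \<Longrightarrow> is_instance V w \<longleftrightarrow> (\<exists>f. w = map f V)"
proof
  assume "length w = length V" "is_instance V w"
  then obtain \<phi> where "\<forall>x\<in>set V. \<phi> x \<noteq> []" "concat (map \<phi> V) = w"
    unfolding is_instance_def by blast
  with \<open>length w = length V\<close> show "\<exists>f. w = map f V"
    using concat_map_eq_map_hd by blast
next
  assume "\<exists>f. w = map f V"
  then obtain f where "w = map f V" by blast
  then show "is_instance V w"
    unfolding is_instance_def by (intro exI[of _ "\<lambda>x. [f x]"]) (simp add: concat_map_singleton)
qed

lemma is_instance_zimin_one: "is_instance (zimin 1) [x]"
  unfolding is_instance_def by (intro exI[of _ "\<lambda>_. [x]"]) simp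

lemma zimin_Suc: "zimin (Suc k) = zimin k @ [Suc k] @ zimin k"
  by (cases k) auto

lemma length_zimin: "length (zimin k) = 2 ^ k - 1"
  by (induction k) (simp_all add: zimin_Suc)

lemma set_zimin: "set (zimin k) = {1..k}"
  by (induction k) (auto simp: zimin_Suc)

lemma is_instance_zimin_Suc:
  assumes "is_instance (zimin k) A" "y \<noteq> []"
  shows "is_instance (zimin (Suc k)) (A @ y @ A)"
proof -
  obtain \<phi> where \<phi>: "\<forall>x\<in>set (zimin k). \<phi> x \<noteq> []" "concat (map \<phi> (zimin k)) = A"
    using assms(1) unfolding is_instance_def by blast
  have "map (\<phi>(Suc k := y)) (zimin k) = map \<phi> (zimin k)"
    by (intro map_cong) (auto simp: set_zimin)
  then show ?thesis
    unfolding is_instance_def using \<phi> assms(2)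
    by (intro exI[of _ "\<phi>(Suc k := y)"]) (auto simp: zimin_Suc set_zimin)
qed

lemma zimin_append_tail: "k \<le> n \<Longrightarrow> \<exists>s. zimin n = zimin k @ s"
proof (induction n)
  case (Suc n)
  then show ?case by (cases "k = Suc n") (auto simp: zimin_Suc)
qed simp

lemma zimin_split:
  assumes "1 \<le> k" "k \<le> n"
  obtains s where "zimin n = zimin (k - 1) @ k # s"
proof -
  obtain t where "zimin n = zimin k @ t" using zimin_append_tail[OF assms(2)] by blast
  then show thesis using zimin_Suc[of "k - 1"] assms(1) by (intro that[of "zimin (k - 1) @ t"]) simp
qed

lemma zimin_split_repeat:
  assumes "1 \<le> k" "k < n"
  obtains s where "zimin n = zimin (k - 1) @ k # s" "k \<in> set s"
proof -
  obtain t where "zimin n = zimin (Suc k) @ t" using zimin_append_tail[of "Suc k" n] assms(2) by auto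
  then have "zimin n = zimin (k - 1) @ k # zimin (k - 1) @ Suc k # zimin k @ t"
    using zimin_Suc[of "k - 1"] assms(1) by (simp add: zimin_Suc)
  then show thesis using assms(1) by (intro that) (auto simp: set_zimin)
qed

lemma take_Suc_add_border:
  assumes "a < d" "a + d < length W" "\<forall>i\<le>a. W ! i = W ! (i + d)"
  shows "take (Suc (a + d)) W = take (Suc a) W @ drop (Suc a) (take d W) @ take (Suc a) W"
proof -
  have "take (Suc (a + d)) W = take d W @ take (Suc a) (drop d W)"
    by (metis add.commute add_Suc_right take_add)
  moreover have "take d W = take (Suc a) W @ drop (Suc a) (take d W)"
    using assms(1) by (metis Suc_leI append_take_drop_id min.absorb1 take_take)
  moreover have "take (Suc a) (drop d W) = take (Suc a) W"
    using assms(2,3) by (intro nth_equalityI) (auto simp: add.commute)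
  ultimately show ?thesis by simp
qed

locale zimin_truth_table =
  fixes q n :: nat
  assumes q_ge_2: "2 \<le> q" and n_gt_1: "1 < n"
begin

definition code :: "(nat \<Rightarrow> nat) \<Rightarrow> nat" where
  "code f = radix_value q (map f (zimin n))"

definition instance_code :: "nat \<Rightarrow> bool" where
  "instance_code i \<longleftrightarrow> (\<exists>f. (\<forall>k. f k < q) \<and> code f = i)"

abbreviation T :: "nat list" where
  "T \<equiv> truth_table n q (2 ^ n - 1)"

lemma length_T: "length T = q ^ (2 ^ n - 1)"
  unfolding truth_table_def by (simp add: length_lex_words)

lemma nth_T:
  assumes "i < q ^ (2 ^ n - 1)"
  shows "T ! i = (if instance_code i then 1 else 0)"
proof -
  define w where "w = lex_words q (2 ^ n - 1) ! i"
  have w: "w \<in> digit_words q (2 ^ n - 1)" "radix_value q w = i"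
    using nth_lex_words[OF assms] unfolding w_def by simp_all
  then have len: "length w = length (zimin n)" by (simp add: digit_words_def length_zimin)
  have "is_instance (zimin n) w \<longleftrightarrow> instance_code i"
  proof
    assume "is_instance (zimin n) w"
    then obtain f where f: "w = map f (zimin n)" using is_instance_same_length_iff[OF len] by blast
    define f' where "f' k = (if k \<in> set (zimin n) then f k else 0)" for k
    have "map f' (zimin n) = w" unfolding f f'_def by simp
    moreover have "f' k < q" for k
      using w(1) q_ge_2 unfolding f f'_def digit_words_def by auto
    ultimately show "instance_code i" unfolding instance_code_def code_def using w(2) by metis
  next
    assume "instance_code i"
    then obtain f where f: "\<forall>k. f k < q" "code f = i" unfolding instance_code_def by blast
    have "map f (zimin n) \<in> digit_words q (2 ^ n - 1)"
      using f(1) by (auto simp: digit_words_def length_zimin)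
    then have "map f (zimin n) = w"
      using strict_mono_on_imp_inj_on[OF strict_mono_on_radix_value] w f(2)
      unfolding code_def by (auto dest: inj_onD)
    then show "is_instance (zimin n) w" using is_instance_same_length_iff[OF len] by blast
  qed
  then show ?thesis using assms length_lex_words unfolding truth_table_def w_def by simp
qed


lemma le_at_first_difference:
  assumes "\<forall>j. f j < q" "\<forall>j. g j < q" "1 \<le> k" "k \<le> n"
    "\<forall>j. 1 \<le> j \<longrightarrow> j < k \<longrightarrow> f j = g j" "code f \<le> code g"
  shows "f k \<le> g k"
proof (rule ccontr)
  assume "\<not> f k \<le> g k"
  obtain s where s: "zimin n = zimin (k - 1) @ k # s" using zimin_split[OF assms(3,4)] .
  have prefix: "map g (zimin (k - 1)) = map f (zimin (k - 1))"
    using assms(5) by (intro map_cong) (auto simp: set_zimin)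
  have "map g (zimin n) < map f (zimin n)"
    unfolding s list_less_def map_append list.map prefix
    by (rule lexord_append_left_rightI) (use \<open>\<not> f k \<le> g k\<close> in simp)
  then have "code g < code f"
    unfolding code_def using assms(1,2) by (intro radix_value_strict_mono) auto
  with assms(6) show False by simp
qed

lemma zero_below_if_code_le:
  assumes "\<forall>j. f j < q" "\<forall>j. g j < q" "r \<le> n"
    "\<forall>j. 1 \<le> j \<longrightarrow> j \<le> r \<longrightarrow> g j = 0" "code f \<le> code g"
  shows "1 \<le> j \<Longrightarrow> j \<le> r \<Longrightarrow> f j = 0"
proof (induction j rule: less_induct)
  case (less j)
  have "f j \<le> g j" using assms less by (intro le_at_first_difference[of f g j]) auto
  with assms(4) less.prems show ?case by simp
qed

text \<open>code (bound r) and code (step r) are the a_r and d_r of the proof idea above.\<close>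

definition bound :: "nat \<Rightarrow> nat \<Rightarrow> nat" where
  "bound r k = (if k < r \<or> n < k then 0 else if k = r then (if r = 1 then q - 1 else 1) else q - 1)"

definition step :: "nat \<Rightarrow> nat \<Rightarrow> nat" where
  "step r k = bound r k - bound (Suc r) k"

lemma bound_less: "bound r k < q"
  using q_ge_2 unfolding bound_def by auto

lemma step_eq:
  "1 \<le> r \<Longrightarrow> step r k = (if k = r then bound r r else if k = Suc r \<and> Suc r \<le> n then q - 2 else 0)"
  unfolding step_def bound_def by auto

lemma code_bound_eq_step_add:
  assumes "1 \<le> r"
  shows "code (bound r) = code (step r) + code (bound (Suc r))"
proof -
  have "bound (Suc r) k \<le> bound r k" for k
    using assms q_ge_2 unfolding bound_def by auto
  then show ?thesis
    unfolding code_def step_def using radix_value_map_diff[of "zimin n" "bound (Suc r)" "bound r" q] by simp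
qed

lemma code_bound_one: "code (bound 1) = q ^ (2 ^ n - 1) - 1"
proof -
  have "map (bound 1) (zimin n) = map (\<lambda>_. q - 1) (zimin n)"
    by (intro map_cong) (auto simp: bound_def set_zimin)
  then have "map (bound 1) (zimin n) = replicate (2 ^ n - 1) (q - 1)"
    by (simp add: map_replicate_const length_zimin)
  then show ?thesis unfolding code_def using radix_value_replicate_max q_ge_2 by simp
qed

lemma code_bound_Suc_n: "code (bound (Suc n)) = 0"
  unfolding code_def by (intro radix_value_zeros) (auto simp: bound_def set_zimin)


lemma instance_code_add_step:
  assumes r: "1 \<le> r" "r \<le> n" and "instance_code i" and "i \<le> code (bound (Suc r))"
  shows "instance_code (i + code (step r))"
proof -
  obtain f where f: "\<forall>k. f k < q" "code f = i"
    using assms(3) unfolding instance_code_def by blast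
  have le: "code f \<le> code (bound (Suc r))" using f(2) assms(4) by simp
  have below: "\<forall>j. 1 \<le> j \<longrightarrow> j \<le> r \<longrightarrow> bound (Suc r) j = 0" by (simp add: bound_def)
  have zero: "\<forall>j. 1 \<le> j \<longrightarrow> j \<le> r \<longrightarrow> f j = 0"
    using zero_below_if_code_le[OF f(1) _ r(2) below le] bound_less by blast
  have next_le: "f (Suc r) \<le> 1" if "Suc r \<le> n"
  proof -
    have "f (Suc r) \<le> bound (Suc r) (Suc r)"
      using le_at_first_difference[OF f(1) _ _ that _ le] bound_less zero below
      by (simp add: less_Suc_eq_le)
    then show ?thesis using r(1) that by (simp add: bound_def)
  qed
  have "\<forall>k. f k + step r k < q"
    using f(1) zero next_le bound_less[of r r] q_ge_2 r by (auto simp: step_eq)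
  moreover have "code (\<lambda>k. f k + step r k) = i + code (step r)"
    using f(2) radix_value_map_add[of q f "step r" "zimin n"] unfolding code_def by simp
  ultimately show ?thesis unfolding instance_code_def by (intro exI[of _ "\<lambda>k. f k + step r k"]) simp
qed

lemma instance_code_sub_step:
  assumes r: "1 \<le> r" "r \<le> n" and "instance_code (i + code (step r))" and "i \<le> code (bound (Suc r))"
  shows "instance_code i"
proof -
  obtain h where h: "\<forall>k. h k < q" "code h = i + code (step r)"
    using assms(3) unfolding instance_code_def by blast
  have le: "code h \<le> code (bound r)" using h(2) assms(4) code_bound_eq_step_add[OF r(1)] by simp
  have ge: "code (step r) \<le> code h" using h(2) by simp
  have step_less: "\<forall>k. step r k < q" using bound_less by (simp add: step_def less_imp_diff_less)
  have below: "\<forall>j. 1 \<le> j \<longrightarrow> j \<le> r - 1 \<longrightarrow> bound r j = 0" by (auto simp: bound_def)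
  have zero: "\<forall>j. 1 \<le> j \<longrightarrow> j < r \<longrightarrow> h j = 0"
  proof (intro allI impI)
    fix j assume "1 \<le> j" "j < r"
    then show "h j = 0" using zero_below_if_code_le[OF h(1) _ _ below le, of j] bound_less r(2) by simp
  qed
  have "h r \<le> bound r r"
    using le_at_first_difference[OF h(1) _ r _ le] bound_less zero by (simp add: bound_def)
  moreover have "step r r \<le> h r"
    using le_at_first_difference[OF step_less h(1) r _ ge] zero r(1) by (simp add: step_eq)
  ultimately have at_r: "h r = bound r r" using step_eq[OF r(1)] by simp
  have at_Suc_r: "q - 2 \<le> h (Suc r)" if "Suc r \<le> n"
    using le_at_first_difference[OF step_less h(1) _ that _ ge] zero at_r r(1) that
    by (simp add: step_eq less_Suc_eq)
  have "\<forall>k. step r k \<le> h k"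
    using zero at_r at_Suc_r r(1) by (simp add: step_eq)
  then have "code (\<lambda>k. h k - step r k) = i"
    using h(2) radix_value_map_diff[of "zimin n" "step r" h q] unfolding code_def by simp
  moreover have "\<forall>k. h k - step r k < q" using h(1) by (simp add: less_imp_diff_less)
  ultimately show ?thesis unfolding instance_code_def by (intro exI[of _ "\<lambda>k. h k - step r k"]) simp
qed


lemma code_bound_Suc_add_2_le:
  assumes r: "1 \<le> r" "r \<le> n"
  shows "code (bound (Suc r)) + 2 \<le> code (step r)"
proof (cases "r = n")
  case True
  have "2 ^ 1 \<le> (2::nat) ^ (n - 1)" using n_gt_1 by (intro power_increasing) auto
  then have "q ^ 1 \<le> q ^ length (zimin (n - 1))"
    using q_ge_2 by (intro power_increasing) (simp_all add: length_zimin)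
  then have "2 \<le> q ^ length (zimin (n - 1))" using q_ge_2 by simp
  also have "\<dots> \<le> step n n * q ^ length (zimin (n - 1))"
    using q_ge_2 n_gt_1 by (simp add: step_eq bound_def)
  also have "\<dots> \<le> code (step n)"
    using zimin_Suc[of "n - 1"] n_gt_1 unfolding code_def by (simp add: radix_value_append)
  finally show ?thesis using True code_bound_Suc_n by simp
next
  case False
  obtain s where s: "zimin n = zimin (r - 1) @ r # s" "r \<in> set s"
    using zimin_split_repeat r False by (metis le_neq_implies_less)
  have prefix: "map (bound (Suc r)) (zimin (r - 1)) = map (step r) (zimin (r - 1))"
    using r by (intro map_cong) (auto simp: set_zimin step_eq bound_def)
  have "0 < step r r" using r q_ge_2 by (simp add: step_eq bound_def)
  moreover have "set (map (bound (Suc r)) s) \<subseteq> {..<q}" using bound_less by auto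
  moreover have "bound (Suc r) r = 0" by (simp add: bound_def)
  ultimately have "code (bound (Suc r)) + 1 + radix_value q (map (step r) s) \<le> code (step r)"
    unfolding code_def s(1) map_append list.map prefix
    using radix_value_append_Cons_gap[of _ "map (step r) s"] by simp
  moreover have "0 < radix_value q (map (step r) s)"
    using radix_value_pos[of "step r r"] s(2) \<open>0 < step r r\<close> q_ge_2 by simp
  ultimately show ?thesis by simp
qed

lemma code_bound_less: "code (bound r) < q ^ (2 ^ n - 1)"
  using radix_value_less_power[of "map (bound r) (zimin n)" q] bound_less
  unfolding code_def by (auto simp: length_zimin)

lemma is_instance_take_T_Suc:
  assumes r: "1 \<le> r" "r \<le> n"
    and "is_instance (zimin k) (take (Suc (code (bound (Suc r)))) T)"
  shows "is_instance (zimin (Suc k)) (take (Suc (code (bound r))) T)"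
proof -
  define a d where "a = code (bound (Suc r))" and "d = code (step r)"
  have split: "code (bound r) = a + d" using code_bound_eq_step_add[OF r(1)] unfolding a_def d_def by simp
  have gap: "a + 2 \<le> d" using code_bound_Suc_add_2_le[OF r] unfolding a_def d_def .
  have within: "a + d < length T" using code_bound_less[of r] split length_T by simp
  have "\<forall>i\<le>a. T ! i = T ! (i + d)"
  proof (intro allI impI)
    fix i assume "i \<le> a"
    then have "instance_code (i + d) \<longleftrightarrow> instance_code i"
      using instance_code_add_step[OF r] instance_code_sub_step[OF r] unfolding a_def d_def by blast
    then show "T ! i = T ! (i + d)" using nth_T within length_T \<open>i \<le> a\<close> by simp
  qed
  then have "take (Suc (a + d)) T = take (Suc a) T @ drop (Suc a) (take d T) @ take (Suc a) T"
    by (intro take_Suc_add_border) (use gap within in simp_all)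
  moreover have "drop (Suc a) (take d T) \<noteq> []" using gap within by simp
  ultimately show ?thesis
    using is_instance_zimin_Suc assms(3) split unfolding a_def by metis
qed

lemma is_instance_take_T:
  "j \<le> n \<Longrightarrow> is_instance (zimin (Suc j)) (take (Suc (code (bound (Suc n - j)))) T)"
proof (induction j)
  case 0
  have "T \<noteq> []" using length_T q_ge_2 by (metis list.size(3) power_not_zero zero_neq_numeral not_numeral_le_zero)
  then show ?case using code_bound_Suc_n is_instance_zimin_one by (cases T) simp_all
next
  case (Suc j)
  then have "is_instance (zimin (Suc j)) (take (Suc (code (bound (Suc (n - j))))) T)"
    by (simp add: Suc_diff_le)
  then show ?case using is_instance_take_T_Suc[of "n - j" "Suc j"] Suc.prems by simp
qed

lemma is_instance_T: "is_instance (zimin (n + 1)) T"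
  using is_instance_take_T[of n] code_bound_one length_T q_ge_2 by simp

end

theorem theorem2:
  fixes q n m :: nat
  assumes "q \<ge> 2" and "n > 1" and "m = 2 ^ n - 1"
  shows "set (truth_table n q m) \<subseteq> {0, 1} \<and> is_instance (zimin (n + 1)) (truth_table n q m)"
proof
  show "set (truth_table n q m) \<subseteq> {0, 1}" unfolding truth_table_def by auto
  interpret zimin_truth_table q n using assms(1,2) by unfold_locales
  show "is_instance (zimin (n + 1)) (truth_table n q m)" using is_instance_T assms(3) by simp
qed

end
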